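(* Let $n\ge2$, $\Gamma_n=\langle c,\mu\mid c^n\mu^{-3}c^n\mu^{-1}=1\rangle$ (the fundamental group of the 3-manifold $M_n$ obtained by gluing the exterior of the $(2,2n)$-torus link to the orientable $I$-bundle over the Klein bottle, with peripheral subgroup $\langle\mu^{-2}c,c^n\rangle$), and for $k=1,\dots,n-1$ let $Y_k=\{t_\mu=0,\ t_c=2\cos(\pi k/n)\}$ in the coordinates $(t_c,t_\mu,t_{c\mu})$ of $X(\Gamma_n,\mathrm{SL}_2(\mathbb C))$. Then the character scheme $X(\Gamma_n,\mathrm{SL}_2(\mathbb C))$ is non-reduced at every point of $Y_k$, for every $k=1,\dots,n-1$.
   Context: $X(\Gamma,\mathrm{SL}_2(\mathbb C))=(\mathrm{Spm}\,B(\Gamma),B(\Gamma))$ is the character scheme, with $B(\Gamma)$ the conjugation invariants of the universal $\mathrm{SL}_2(\mathbb C)$-representation algebra; a point is non-reduced if the local ring of $B(\Gamma)$ at the corresponding maximal ideal has nonzero nilpotents. $t_\gamma$ denotes the trace function of $\gamma$. *)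

theory Defs
  imports Complex_Main "HOL-Library.Poly_Mapping"
begin

type_synonym cpoly = "(nat \<Rightarrow>\<^sub>0 nat) \<Rightarrow>\<^sub>0 complex"

definition pconst :: "complex \<Rightarrow> cpoly" where
  "pconst c = Poly_Mapping.single 0 c"

definition pvar :: "nat \<Rightarrow> cpoly" where
  "pvar i = Poly_Mapping.single (Poly_Mapping.single i 1) 1"

definition psubst :: "(nat \<Rightarrow> cpoly) \<Rightarrow> cpoly \<Rightarrow> cpoly" where
  "psubst \<sigma> p = (\<Sum>m\<in>Poly_Mapping.keys p.
      pconst (Poly_Mapping.lookup p m) *
      (\<Prod>i\<in>Poly_Mapping.keys m. \<sigma> i ^ Poly_Mapping.lookup m i))"

definition peval :: "(nat \<Rightarrow> complex) \<Rightarrow> cpoly \<Rightarrow> complex" where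
  "peval x p = (\<Sum>m\<in>Poly_Mapping.keys p.
      Poly_Mapping.lookup p m * (\<Prod>i\<in>Poly_Mapping.keys m. x i ^ Poly_Mapping.lookup m i))"

section \<open>2x2 matrices over a commutative ring, as tuples (a11, a12, a21, a22)\<close>

type_synonym 'a m2 = "'a \<times> 'a \<times> 'a \<times> 'a"

fun m2mul :: "'a::comm_ring_1 m2 \<Rightarrow> 'a m2 \<Rightarrow> 'a m2" where
  "m2mul (a,b,c,d) (e,f,g,h) = (a*e + b*g, a*f + b*h, c*e + d*g, c*f + d*h)"

definition m2id :: "'a::comm_ring_1 m2" where
  "m2id = (1, 0, 0, 1)"

fun m2det :: "'a::comm_ring_1 m2 \<Rightarrow> 'a" where
  "m2det (a,b,c,d) = a*d - b*c"

fun m2tr :: "'a::comm_ring_1 m2 \<Rightarrow> 'a" where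
  "m2tr (a,b,c,d) = a + d"

text \<open>Adjugate; equals the inverse for determinant-one matrices.\<close>
fun m2adj :: "'a::comm_ring_1 m2 \<Rightarrow> 'a m2" where
  "m2adj (a,b,c,d) = (d, -b, -c, a)"

fun m2pow :: "'a::comm_ring_1 m2 \<Rightarrow> nat \<Rightarrow> 'a m2" where
  "m2pow A 0 = m2id"
| "m2pow A (Suc k) = m2mul A (m2pow A k)"

fun m2list :: "'a m2 \<Rightarrow> 'a list" where
  "m2list (a,b,c,d) = [a,b,c,d]"

definition matC :: "cpoly m2" where
  "matC = (pvar 0, pvar 1, pvar 2, pvar 3)"

definition matMu :: "cpoly m2" where
  "matMu = (pvar 4, pvar 5, pvar 6, pvar 7)"

definition relword :: "nat \<Rightarrow> 'a::comm_ring_1 m2 \<Rightarrow> 'a m2 \<Rightarrow> 'a m2" where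
  "relword n A B = m2mul (m2pow A n) (m2mul (m2pow (m2adj B) 3)
                     (m2mul (m2pow A n) (m2adj B)))"

text \<open>Generators of the defining ideal J_n of the universal representation algebra
  A(Gamma_n) = C[x0..x7] / J_n.\<close>
definition relgens :: "nat \<Rightarrow> cpoly list" where
  "relgens n = [m2det matC - 1, m2det matMu - 1] @
     map2 (-) (m2list (relword n matC matMu)) (m2list (m2id :: cpoly m2))"

definition inJ :: "nat \<Rightarrow> cpoly \<Rightarrow> bool" where
  "inJ n f \<longleftrightarrow> (\<exists>q :: nat \<Rightarrow> cpoly.
      f = (\<Sum>i<length (relgens n). q i * relgens n ! i))"

definition conjsubst :: "complex m2 \<Rightarrow> nat \<Rightarrow> cpoly" where
  "conjsubst g i =
     (let G = (case g of (a,b,c,d) \<Rightarrow> (pconst a, pconst b, pconst c, pconst d));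
          A' = m2mul G (m2mul matC (m2adj G));
          B' = m2mul G (m2mul matMu (m2adj G))
      in if i < 4 then m2list A' ! i else if i < 8 then m2list B' ! (i - 4) else pvar i)"

text \<open>Representatives of elements of B(Gamma_n) = A(Gamma_n)^{SL2(C)}:
  polynomials whose class modulo J_n is conjugation invariant.\<close>
definition inB :: "nat \<Rightarrow> cpoly \<Rightarrow> bool" where
  "inB n f \<longleftrightarrow> (\<forall>g. m2det g = 1 \<longrightarrow> inJ n (psubst (conjsubst g) f - f))"

definition is_rep :: "nat \<Rightarrow> complex m2 \<Rightarrow> complex m2 \<Rightarrow> bool" where
  "is_rep n A B \<longleftrightarrow> m2det A = 1 \<and> m2det B = 1 \<and> relword n A B = m2id"

definition coords :: "complex m2 \<Rightarrow> complex m2 \<Rightarrow> nat \<Rightarrow> complex" where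
  "coords A B i = (if i < 4 then m2list A ! i else if i < 8 then m2list B ! (i - 4) else 0)"

text \<open>The maximal ideal of B(Gamma_n) of the point (character) of rho = (A,B):
  invariants vanishing at rho.\<close>
definition in_maxideal :: "nat \<Rightarrow> complex m2 \<Rightarrow> complex m2 \<Rightarrow> cpoly \<Rightarrow> bool" where
  "in_maxideal n A B f \<longleftrightarrow> inB n f \<and> peval (coords A B) f = 0"

text \<open>The local ring B(Gamma_n)_m at the point of rho has a nonzero nilpotent:
  some f in B has f/1 nonzero (no s outside m kills f) but f^N/1 = 0
  (some s outside m kills f^N).\<close>
definition nonreduced_at :: "nat \<Rightarrow> complex m2 \<Rightarrow> complex m2 \<Rightarrow> bool" where
  "nonreduced_at n A B \<longleftrightarrow> (\<exists>f. inB n f \<and>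
      (\<forall>s. inB n s \<and> \<not> in_maxideal n A B s \<longrightarrow> \<not> inJ n (s * f)) \<and>
      (\<exists>N s. inB n s \<and> \<not> in_maxideal n A B s \<and> inJ n (s * f ^ N)))"

end

theory Submission
  imports Defs "HOL-Computational_Algebra.Polynomial"
begin

text \<open>The nilpotent is \<open>f = t\<^sub>\<mu> G\<close>, where \<open>G\<close> is the Gram determinant of \<open>(1, c, \<mu>)\<close> for the trace
  form; it is a conjugation invariant.

  \<open>f\<^sup>2 = 0\<close>: multiplying the relator by \<open>\<mu>\<close> and reducing with Cayley--Hamilton shows that
  \<open>t\<^sub>\<mu>\<^sup>2 \<mu>\<close> is, modulo the defining ideal \<open>J\<close>, a combination of \<open>1\<close> and \<open>c\<close>. Pairing this
  relation with \<open>1, c, \<mu>\<close> under the trace form and solving by Cramer's rule gives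
  \<open>t\<^sub>\<mu>\<^sup>2 G \<in> J\<close>, hence \<open>f\<^sup>2 \<in> J\<close>.

  \<open>f \<noteq> 0\<close> in the local ring: on \<open>Y\<^sub>k\<close> the matrix \<open>\<rho>(c)\<close> has eigenvalues \<open>exp (\<plusminus> i \<pi> k / n)\<close>, so
  \<open>\<rho>(c)\<^sup>n = \<plusminus>I\<close> and every traceless \<open>X \<in> SL\<^sub>2\<close> gives a representation \<open>(\<rho>(c), X)\<close>. Given an
  invariant \<open>s\<close> not vanishing at \<open>\<rho>\<close>, move \<open>\<rho>(\<mu>)\<close> along a conic of such \<open>X\<close> to a point
  where also \<open>tr (\<rho>(c) X) \<noteq> 0\<close> and \<open>G \<noteq> 0\<close>. There an explicit first-order deformation over the
  dual numbers moves \<open>t\<^sub>\<mu>\<close> with non-zero speed, so \<open>s f\<close> has non-zero derivative along it, while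
  every element of \<open>J\<close> vanishes identically on it.\<close>

section \<open>Ring homomorphisms and evaluation of polynomials\<close>

locale comm_ring_hom =
  fixes hom :: "'a::comm_ring_1 \<Rightarrow> 'b::comm_ring_1"
  assumes hom_add: "hom (a + b) = hom a + hom b"
    and hom_mult: "hom (a * b) = hom a * hom b"
    and hom_1: "hom 1 = 1"
begin

lemma hom_0: "hom 0 = 0"
  using hom_add[of 0 0] by simp

lemma hom_uminus: "hom (- a) = - hom a"
  using hom_add[of "- a" a] by (simp add: hom_0 eq_neg_iff_add_eq_0)

lemma hom_diff: "hom (a - b) = hom a - hom b"
  using hom_add[of a "- b"] by (simp add: hom_uminus)

lemma hom_power: "hom (a ^ k) = hom a ^ k"
  by (induct k) (simp_all add: hom_1 hom_mult)

lemma hom_sum: "hom (sum f S) = (\<Sum>i\<in>S. hom (f i))"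
  by (induct S rule: infinite_finite_induct) (simp_all add: hom_0 hom_add)

lemma hom_prod: "hom (prod f S) = (\<Prod>i\<in>S. hom (f i))"
  by (induct S rule: infinite_finite_induct) (simp_all add: hom_1 hom_mult)

lemma hom_of_nat: "hom (of_nat k) = of_nat k"
  by (induct k) (simp_all add: hom_0 hom_1 hom_add)

lemma hom_numeral: "hom (numeral k) = numeral k"
  using hom_of_nat[of "numeral k"] by simp

lemmas hom_simps = hom_0 hom_1 hom_add hom_mult hom_uminus hom_diff hom_power hom_numeral

end

definition monomial_value :: "(nat \<Rightarrow> 'a::comm_ring_1) \<Rightarrow> (nat \<Rightarrow>\<^sub>0 nat) \<Rightarrow> 'a" where
  "monomial_value x m = (\<Prod>i\<in>Poly_Mapping.keys m. x i ^ Poly_Mapping.lookup m i)"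

definition eval_pm :: "(complex \<Rightarrow> 'a::comm_ring_1) \<Rightarrow> (nat \<Rightarrow> 'a) \<Rightarrow> cpoly \<Rightarrow> 'a" where
  "eval_pm emb x p =
     (\<Sum>m\<in>Poly_Mapping.keys p. emb (Poly_Mapping.lookup p m) * monomial_value x m)"

lemma peval_eq_eval_pm: "peval = eval_pm id"
  by (simp add: fun_eq_iff peval_def eval_pm_def monomial_value_def)

lemma psubst_eq_eval_pm: "psubst \<sigma> = eval_pm pconst \<sigma>"
  by (simp add: fun_eq_iff psubst_def eval_pm_def monomial_value_def)

lemma monomial_value_add: "monomial_value x (m + m') = monomial_value x m * monomial_value x m'"
proof -
  let ?S = "Poly_Mapping.keys m \<union> Poly_Mapping.keys m'"
  have extend: "monomial_value x k = (\<Prod>i\<in>?S. x i ^ Poly_Mapping.lookup k i)"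
    if "Poly_Mapping.keys k \<subseteq> ?S" for k
    unfolding monomial_value_def
    by (rule prod.mono_neutral_left) (use that in \<open>auto simp: in_keys_iff\<close>)
  show ?thesis
    by (simp add: extend keys_add lookup_add power_add prod.distrib)
qed

lemma monomial_value_0: "monomial_value x 0 = 1"
  by (simp add: monomial_value_def)

context
  fixes emb :: "complex \<Rightarrow> 'a::comm_ring_1"
  assumes emb: "comm_ring_hom emb"
begin

interpretation emb: comm_ring_hom emb by (fact emb)

lemma eval_pm_single: "eval_pm emb x (Poly_Mapping.single m c) = emb c * monomial_value x m"
  by (simp add: eval_pm_def emb.hom_0)

lemma eval_pm_0: "eval_pm emb x 0 = 0"
  by (simp add: eval_pm_def)

lemma eval_pm_add: "eval_pm emb x (p + q) = eval_pm emb x p + eval_pm emb x q"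
  unfolding eval_pm_def
  by (rule setsum_keys_plus_distrib) (simp_all add: emb.hom_0 emb.hom_add distrib_right)

lemma eval_pm_sum: "eval_pm emb x (sum f S) = (\<Sum>i\<in>S. eval_pm emb x (f i))"
  by (induct S rule: infinite_finite_induct) (simp_all add: eval_pm_0 eval_pm_add)

lemma eval_pm_mult: "eval_pm emb x (p * q) = eval_pm emb x p * eval_pm emb x q"
proof -
  have expand: "r = (\<Sum>m\<in>Poly_Mapping.keys r. Poly_Mapping.single m (Poly_Mapping.lookup r m))"
    for r :: cpoly
    by (rule poly_mapping_eqI) (simp add: lookup_sum lookup_single when_def in_keys_iff)
  have pq: "p * q = (\<Sum>m\<in>Poly_Mapping.keys p. \<Sum>m'\<in>Poly_Mapping.keys q.
      Poly_Mapping.single (m + m') (Poly_Mapping.lookup p m * Poly_Mapping.lookup q m'))"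
    by (subst expand[of p], subst expand[of q]) (simp add: sum_product mult_single)
  have "eval_pm emb x (p * q) = (\<Sum>m\<in>Poly_Mapping.keys p. \<Sum>m'\<in>Poly_Mapping.keys q.
      emb (Poly_Mapping.lookup p m) * monomial_value x m *
      (emb (Poly_Mapping.lookup q m') * monomial_value x m'))"
    by (simp add: pq eval_pm_sum eval_pm_single emb.hom_mult monomial_value_add mult_ac)
  also have "\<dots> = eval_pm emb x p * eval_pm emb x q"
    by (simp add: eval_pm_def sum_product)
  finally show ?thesis .
qed

lemma eval_pm_1: "eval_pm emb x 1 = 1"
  using eval_pm_single[of x 0 1] by (simp add: emb.hom_1 monomial_value_0)

lemma comm_ring_hom_eval_pm: "comm_ring_hom (eval_pm emb x)"
  by unfold_locales (simp_all add: eval_pm_add eval_pm_mult eval_pm_1)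

lemma eval_pm_pvar: "eval_pm emb x (pvar i) = x i"
  by (simp add: pvar_def eval_pm_single emb.hom_1 monomial_value_def)

end

lemma (in comm_ring_hom) hom_eval_pm: "hom (eval_pm emb x p) = eval_pm (hom \<circ> emb) (hom \<circ> x) p"
  by (simp add: eval_pm_def monomial_value_def hom_sum hom_mult hom_prod hom_power)

lemma comm_ring_hom_id: "comm_ring_hom id"
  by unfold_locales simp_all

lemma comm_ring_hom_pconst: "comm_ring_hom pconst"
  by unfold_locales (simp_all add: pconst_def single_add mult_single)

section \<open>Two-by-two matrices\<close>

fun m2add :: "'a::comm_ring_1 m2 \<Rightarrow> 'a m2 \<Rightarrow> 'a m2" where
  "m2add (a,b,c,d) (e,f,g,h) = (a+e, b+f, c+g, d+h)"

fun m2smul :: "'a::comm_ring_1 \<Rightarrow> 'a m2 \<Rightarrow> 'a m2" where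
  "m2smul r (a,b,c,d) = (r*a, r*b, r*c, r*d)"

definition m2scalar :: "'a::comm_ring_1 \<Rightarrow> 'a m2" where
  "m2scalar r = (r,0,0,r)"

fun m2map :: "('a \<Rightarrow> 'b) \<Rightarrow> 'a m2 \<Rightarrow> 'b m2" where
  "m2map h (a,b,c,d) = (h a, h b, h c, h d)"

definition m2conj :: "'a::comm_ring_1 m2 \<Rightarrow> 'a m2 \<Rightarrow> 'a m2" where
  "m2conj G P = m2mul G (m2mul P (m2adj G))"

context comm_ring_hom
begin

lemma m2map_mul: "m2map hom (m2mul P Q) = m2mul (m2map hom P) (m2map hom Q)"
  by (cases P rule: prod_cases4, cases Q rule: prod_cases4) (simp add: hom_simps)

lemma m2map_id: "m2map hom m2id = m2id"
  by (simp add: m2id_def hom_simps)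

lemma m2map_pow: "m2map hom (m2pow P k) = m2pow (m2map hom P) k"
  by (induct k) (simp_all add: m2map_id m2map_mul)

lemma m2map_adj: "m2map hom (m2adj P) = m2adj (m2map hom P)"
  by (cases P rule: prod_cases4) (simp add: hom_simps)

lemma hom_m2det: "hom (m2det P) = m2det (m2map hom P)"
  by (cases P rule: prod_cases4) (simp add: hom_simps)

lemma hom_m2tr: "hom (m2tr P) = m2tr (m2map hom P)"
  by (cases P rule: prod_cases4) (simp add: hom_simps)

lemma m2map_relword: "m2map hom (relword n P Q) = relword n (m2map hom P) (m2map hom Q)"
  by (simp add: relword_def m2map_mul m2map_pow m2map_adj)

end

lemma traceless_m2_cases:
  assumes "m2tr X = 0"
  obtains a b c where "X = (a, b, c, - a)"
  using assms by (cases X rule: prod_cases4) (simp add: eq_neg_iff_add_eq_0 add.commute)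

lemma m2tr_mul_self: "m2tr (m2mul P P) = m2tr P ^ 2 - 2 * m2det P"
  by (cases P rule: prod_cases4) (simp add: algebra_simps power2_eq_square)

lemma m2det_mul: "m2det (m2mul P Q) = m2det P * m2det Q"
  by (cases P rule: prod_cases4, cases Q rule: prod_cases4) (simp add: algebra_simps)

lemma m2det_pow: "m2det (m2pow P k) = m2det P ^ k"
  by (induct k) (simp_all add: m2det_mul m2id_def)

lemma m2tr_m2conj: "m2tr (m2conj G P) = m2det G * m2tr P"
  unfolding m2conj_def
  by (cases P rule: prod_cases4, cases G rule: prod_cases4) (simp add: algebra_simps)

lemma m2tr_mul_m2conj: "m2tr (m2mul (m2conj G P) (m2conj G Q)) = m2det G ^ 2 * m2tr (m2mul P Q)"
  unfolding m2conj_def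
  by (cases P rule: prod_cases4, cases G rule: prod_cases4, cases Q rule: prod_cases4)
    (simp add: algebra_simps power2_eq_square)

lemma m2tr_lincomb: "m2tr (m2add (m2smul a B) (m2smul b Y)) = a * m2tr B + b * m2tr Y"
  by (cases B rule: prod_cases4, cases Y rule: prod_cases4) (simp add: algebra_simps)

lemma m2tr_mul_lincomb:
  "m2tr (m2mul A (m2add (m2smul a B) (m2smul b Y))) = a * m2tr (m2mul A B) + b * m2tr (m2mul A Y)"
  by (cases A rule: prod_cases4, cases B rule: prod_cases4, cases Y rule: prod_cases4)
    (simp add: algebra_simps)

lemma m2det_traceless_lincomb:
  assumes "m2tr B = 0" "m2tr Y = 0"
  shows "m2det (m2add (m2smul a B) (m2smul b Y)) =
    a^2 * m2det B + b^2 * m2det Y - a * b * m2tr (m2mul B Y)"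
proof -
  obtain b1 b2 b3 where B: "B = (b1, b2, b3, - b1)" using assms(1) by (rule traceless_m2_cases)
  obtain y1 y2 y3 where Y: "Y = (y1, y2, y3, - y1)" using assms(2) by (rule traceless_m2_cases)
  show ?thesis
    unfolding B Y by (simp add: algebra_simps power2_eq_square)
qed

lemma m2list_nth_lincomb:
  "j < 4 \<Longrightarrow> m2list (m2add (m2smul a B) (m2smul b Y)) ! j = a * (m2list B ! j) + b * (m2list Y ! j)"
  by (cases B rule: prod_cases4, cases Y rule: prod_cases4) (auto simp: less_Suc_eq numeral_eq_Suc)

lemma m2list_nth_eq: "(m2list P ! 0, m2list P ! 1, m2list P ! 2, m2list P ! 3) = P"
  by (cases P rule: prod_cases4) simp

fun pow_coeffs :: "nat \<Rightarrow> 'a::comm_ring_1 \<Rightarrow> 'a \<Rightarrow> 'a \<times> 'a" where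
  "pow_coeffs 0 t d = (0, 1)"
| "pow_coeffs (Suc k) t d =
     (t * fst (pow_coeffs k t d) + snd (pow_coeffs k t d), - (d * fst (pow_coeffs k t d)))"

lemma m2pow_eq_pow_coeffs:
  "m2pow P k = m2add (m2smul (fst (pow_coeffs k (m2tr P) (m2det P))) P)
                     (m2scalar (snd (pow_coeffs k (m2tr P) (m2det P))))"
proof (induct k)
  case 0
  then show ?case by (cases P rule: prod_cases4) (simp add: m2id_def m2scalar_def)
next
  case (Suc k)
  then show ?case
    by (simp only: m2pow.simps pow_coeffs.simps, cases P rule: prod_cases4)
      (simp add: m2scalar_def algebra_simps)
qed

lemma m2pow_eigenvalues:
  fixes A :: "'a::idom m2"
  assumes "m2tr A = \<mu> + \<nu>" "m2det A = \<mu> * \<nu>"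
  shows "m2smul (\<mu> - \<nu>) (m2pow A k) =
    m2add (m2smul (\<mu> ^ k - \<nu> ^ k) A) (m2scalar (\<mu> * \<nu> ^ k - \<nu> * \<mu> ^ k))"
proof (induct k)
  case 0
  show ?case by (cases A rule: prod_cases4) (simp add: m2scalar_def m2id_def)
next
  case (Suc k)
  have "m2smul (\<mu> - \<nu>) (m2pow A (Suc k)) = m2mul A (m2smul (\<mu> - \<nu>) (m2pow A k))"
    by (cases A rule: prod_cases4, cases "m2pow A k" rule: prod_cases4) (simp add: algebra_simps)
  also have "\<dots> = m2mul A (m2add (m2smul (\<mu> ^ k - \<nu> ^ k) A) (m2scalar (\<mu> * \<nu> ^ k - \<nu> * \<mu> ^ k)))"
    by (simp only: Suc)
  also have "\<dots> = m2add (m2smul (\<mu> ^ Suc k - \<nu> ^ Suc k) A)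
      (m2scalar (\<mu> * \<nu> ^ Suc k - \<nu> * \<mu> ^ Suc k))"
  proof -
    obtain a b c d where A: "A = (a, b, c, d)" by (cases A rule: prod_cases4)
    have "a + d = \<mu> + \<nu>" "a * d - b * c = \<mu> * \<nu>"
      using assms by (simp_all add: A)
    then have "m2mul A (m2add (m2smul (P - Q) A) (m2scalar (\<mu> * Q - \<nu> * P))) =
        m2add (m2smul (\<mu> * P - \<nu> * Q) A) (m2scalar (\<mu> * (\<nu> * Q) - \<nu> * (\<mu> * P)))" for P Q
      unfolding A by (simp add: m2scalar_def, intro conjI; algebra)
    then show ?thesis
      by simp
  qed
  finally show ?case .
qed

lemma m2pow_eq_scalar:
  fixes A :: "'a::idom m2"
  assumes "m2tr A = \<mu> + \<nu>" "m2det A = \<mu> * \<nu>" "\<mu> \<noteq> \<nu>" "\<mu> ^ n = c" "\<nu> ^ n = c"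
  shows "m2pow A n = m2scalar c"
proof -
  have "m2smul (\<mu> - \<nu>) (m2pow A n) = m2smul (\<mu> - \<nu>) (m2scalar c)"
    unfolding m2pow_eigenvalues[OF assms(1,2)] assms(4,5)
    by (cases A rule: prod_cases4) (simp add: m2scalar_def algebra_simps)
  with assms(3) show ?thesis
    by (cases "m2pow A n" rule: prod_cases4) (simp add: m2scalar_def)
qed

lemma m2pow_perturb:
  fixes u v :: "'a::comm_ring_1"
  assumes vv: "v * v = 0"
  shows "m2pow (m2add (m2smul u A) (m2scalar v)) (Suc k) =
     m2add (m2smul (u ^ Suc k) (m2pow A (Suc k))) (m2smul (of_nat (Suc k) * u ^ k * v) (m2pow A k))"
proof (induct k)
  case 0
  show ?case by (cases A rule: prod_cases4) (simp add: m2scalar_def m2id_def)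
next
  case (Suc k)
  have vv': "v * (v * a) = 0" for a
    using vv by (simp add: mult.assoc[symmetric])
  show ?case
    unfolding m2pow.simps(2)[of _ "Suc k"] Suc
    by (cases A rule: prod_cases4, cases "m2pow A k" rule: prod_cases4)
      (simp add: m2scalar_def algebra_simps vv vv')
qed

lemma m2pow_eq_scalar_pred:
  assumes "m2det A = 1" "m2pow A (Suc k) = m2scalar c"
  shows "m2pow A k = m2smul c (m2adj A)"
proof -
  have "m2mul (m2adj A) (m2pow A (Suc k)) = m2smul (m2det A) (m2pow A k)"
    by (cases A rule: prod_cases4, cases "m2pow A k" rule: prod_cases4) (simp add: algebra_simps)
  then show ?thesis
    using assms by (cases A rule: prod_cases4, cases "m2pow A k" rule: prod_cases4)
      (simp add: m2scalar_def ac_simps)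
qed

lemma exists_traceless_orthogonal_invertible:
  fixes B :: "'a::field m2"
  assumes "m2tr B = 0"
  shows "\<exists>Y. m2tr Y = 0 \<and> m2tr (m2mul B Y) = 0 \<and> m2det Y \<noteq> 0"
proof -
  obtain b1 b2 b3 where B: "B = (b1, b2, b3, - b1)" using assms by (rule traceless_m2_cases)
  consider "b2 \<noteq> 0" | "b3 \<noteq> 0" | "b2 = 0" "b3 = 0" by blast
  then show ?thesis
  proof cases
    case 1
    then show ?thesis by (intro exI[of _ "(b2, 0, -2 * b1, - b2)"]) (simp add: B algebra_simps)
  next
    case 2
    then show ?thesis by (intro exI[of _ "(b3, -2 * b1, 0, - b3)"]) (simp add: B algebra_simps)
  next
    case 3
    then show ?thesis by (intro exI[of _ "(0, 1, 1, 0)"]) (simp add: B)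
  qed
qed

text \<open>The Gram determinant of \<open>(I, P, Q)\<close> for the trace form \<open>(X, Y) \<mapsto> tr (X Y)\<close>, expanded along
  the first row.\<close>
definition trace_gram :: "'a::comm_ring_1 m2 \<Rightarrow> 'a m2 \<Rightarrow> 'a" where
  "trace_gram P Q =
     (let x = m2tr P; y = m2tr Q; z = m2tr (m2mul P Q);
          p = m2tr (m2mul P P); q = m2tr (m2mul Q Q)
      in 2 * (p * q - z^2) - x * (x * q - z * y) + y * (x * z - p * y))"

lemma trace_gram_m2conj:
  "m2det G = 1 \<Longrightarrow> trace_gram (m2conj G P) (m2conj G Q) = trace_gram P Q"
  by (simp add: trace_gram_def m2tr_m2conj m2tr_mul_m2conj)

lemma (in comm_ring_hom) hom_trace_gram:
  "hom (trace_gram P Q) = trace_gram (m2map hom P) (m2map hom Q)"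
  by (simp add: trace_gram_def Let_def hom_simps hom_m2tr m2map_mul)

text \<open>Cramer's rule: \<open>(tr M, tr (P M), tr (Q M))\<close> is the Gram matrix of \<open>(I, P, Q)\<close> applied to
  \<open>(v, u, w)\<close>.\<close>
lemma trace_gram_cramer:
  assumes "M = m2add (m2smul u P) (m2add (m2scalar v) (m2smul w Q))"
  shows "w * trace_gram P Q =
     2 * (m2tr (m2mul P P) * m2tr (m2mul Q M) - m2tr (m2mul P Q) * m2tr (m2mul P M))
     - m2tr P * (m2tr P * m2tr (m2mul Q M) - m2tr Q * m2tr (m2mul P M))
     + (m2tr P * m2tr (m2mul P Q) - m2tr Q * m2tr (m2mul P P)) * m2tr M"
  unfolding assms trace_gram_def Let_def
  by (cases P rule: prod_cases4, cases Q rule: prod_cases4)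
    (simp add: m2scalar_def algebra_simps power2_eq_square)

lemma trace_gram_traceless:
  assumes "m2det A = 1" "m2tr X = 0" "m2det X = 1"
  shows "trace_gram A X = 2 * (4 - m2tr A ^ 2 - m2tr (m2mul A X) ^ 2)"
  unfolding trace_gram_def Let_def m2tr_mul_self
  using assms by (simp add: algebra_simps power2_eq_square)

lemma inJ_0: "inJ n 0"
  unfolding inJ_def by (rule exI[of _ "\<lambda>_. 0"]) simp

lemma inJ_add:
  assumes "inJ n p" "inJ n q"
  shows "inJ n (p + q)"
proof -
  obtain f g where "p = (\<Sum>i<length (relgens n). f i * relgens n ! i)"
    and "q = (\<Sum>i<length (relgens n). g i * relgens n ! i)"
    using assms by (auto simp: inJ_def)
  then show ?thesis
    unfolding inJ_def by (intro exI[of _ "\<lambda>i. f i + g i"]) (simp add: sum.distrib distrib_right)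
qed

lemma inJ_mult_left:
  assumes "inJ n p"
  shows "inJ n (r * p)"
proof -
  obtain f where "p = (\<Sum>i<length (relgens n). f i * relgens n ! i)"
    using assms by (auto simp: inJ_def)
  then show ?thesis
    unfolding inJ_def by (intro exI[of _ "\<lambda>i. r * f i"]) (simp add: sum_distrib_left mult.assoc)
qed

lemma inJ_mult_right: "inJ n p \<Longrightarrow> inJ n (p * r)"
  using inJ_mult_left[of n p r] by (simp add: mult.commute)

lemma inJ_uminus: "inJ n p \<Longrightarrow> inJ n (- p)"
  using inJ_mult_left[of n p "- 1"] by simp

lemma inJ_diff: "inJ n p \<Longrightarrow> inJ n q \<Longrightarrow> inJ n (p - q)"
  using inJ_add[of n p "- q"] inJ_uminus[of n q] by simp

lemma inJ_power_minus_1: "inJ n (a - 1) \<Longrightarrow> inJ n (a ^ k - 1)"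
proof (induct k)
  case 0
  then show ?case by (simp add: inJ_0)
next
  case (Suc k)
  have "a ^ Suc k - 1 = a * (a ^ k - 1) + (a - 1)"
    by (simp add: algebra_simps)
  then show ?case
    using Suc inJ_add inJ_mult_left by metis
qed

lemma inJ_relgens: "i < length (relgens n) \<Longrightarrow> inJ n (relgens n ! i)"
  unfolding inJ_def
proof (intro exI[of _ "\<lambda>j. if j = i then 1 else 0"])
  assume "i < length (relgens n)"
  have "(\<Sum>j<length (relgens n). (if j = i then 1 else 0) * relgens n ! j)
      = (\<Sum>j<length (relgens n). if j = i then relgens n ! j else 0)"
    by (rule sum.cong) auto
  with \<open>i < length (relgens n)\<close>
  show "relgens n ! i = (\<Sum>j<length (relgens n). (if j = i then 1 else 0) * relgens n ! j)"
    by simp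
qed

fun m2_inJ :: "nat \<Rightarrow> cpoly m2 \<Rightarrow> bool" where
  "m2_inJ n (a,b,c,d) \<longleftrightarrow> inJ n a \<and> inJ n b \<and> inJ n c \<and> inJ n d"

lemma m2_inJ_mul_left: "m2_inJ n P \<Longrightarrow> m2_inJ n (m2mul Q P)"
  by (cases P rule: prod_cases4, cases Q rule: prod_cases4) (simp add: inJ_add inJ_mult_left)

lemma m2_inJ_mul_right: "m2_inJ n P \<Longrightarrow> m2_inJ n (m2mul P Q)"
  by (cases P rule: prod_cases4, cases Q rule: prod_cases4) (simp add: inJ_add inJ_mult_right)

lemma m2_inJ_add: "m2_inJ n P \<Longrightarrow> m2_inJ n Q \<Longrightarrow> m2_inJ n (m2add P Q)"
  by (cases P rule: prod_cases4, cases Q rule: prod_cases4) (simp add: inJ_add)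

lemma m2_inJ_smul: "inJ n r \<Longrightarrow> m2_inJ n (m2smul r P)"
  by (cases P rule: prod_cases4) (simp add: inJ_mult_right)

lemma m2_inJ_scalar: "inJ n r \<Longrightarrow> m2_inJ n (m2scalar r)"
  by (simp add: m2scalar_def inJ_0)

lemma inJ_m2tr: "m2_inJ n P \<Longrightarrow> inJ n (m2tr P)"
  by (cases P rule: prod_cases4) (simp add: inJ_add)

lemma inJ_defining_relations:
  "inJ n (m2det matC - 1)" "inJ n (m2det matMu - 1)"
  "m2_inJ n (m2add (relword n matC matMu) (m2scalar (- 1)))"
proof -
  obtain w1 w2 w3 w4 where W: "relword n matC matMu = (w1, w2, w3, w4)"
    by (cases "relword n matC matMu" rule: prod_cases4)
  have R: "relgens n = [m2det matC - 1, m2det matMu - 1, w1 - 1, w2 - 0, w3 - 0, w4 - 1]"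
    by (simp add: relgens_def W m2id_def)
  have "inJ n (relgens n ! i)" if "i < 6" for i
    using that by (intro inJ_relgens) (simp add: R)
  from this[of 0] this[of 1] this[of 2] this[of 3] this[of 4] this[of 5] show
    "inJ n (m2det matC - 1)" "inJ n (m2det matMu - 1)"
    "m2_inJ n (m2add (relword n matC matMu) (m2scalar (- 1)))"
    by (simp_all add: R W m2scalar_def)
qed

lemma m2map_eval_pm_matC:
  "comm_ring_hom emb \<Longrightarrow> m2map (eval_pm emb x) matC = (x 0, x 1, x 2, x 3)"
  by (simp add: matC_def eval_pm_pvar)

lemma m2map_eval_pm_matMu:
  "comm_ring_hom emb \<Longrightarrow> m2map (eval_pm emb x) matMu = (x 4, x 5, x 6, x 7)"
  by (simp add: matMu_def eval_pm_pvar)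

lemma conjsubst_eq:
  "conjsubst g i =
     (if i < 4 then m2list (m2conj (m2map pconst g) matC) ! i
      else if i < 8 then m2list (m2conj (m2map pconst g) matMu) ! (i - 4) else pvar i)"
  by (cases g rule: prod_cases4) (simp only: conjsubst_def Let_def m2conj_def m2map.simps prod.case)

lemma m2map_psubst_conjsubst_matC:
  "m2map (psubst (conjsubst g)) matC = m2conj (m2map pconst g) matC" (is "_ = ?X")
proof -
  have "m2map (psubst (conjsubst g)) matC = (m2list ?X ! 0, m2list ?X ! 1, m2list ?X ! 2, m2list ?X ! 3)"
    by (simp add: psubst_eq_eval_pm m2map_eval_pm_matC comm_ring_hom_pconst conjsubst_eq)
  then show ?thesis
    by (simp only: m2list_nth_eq)
qed

lemma m2map_psubst_conjsubst_matMu: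
  "m2map (psubst (conjsubst g)) matMu = m2conj (m2map pconst g) matMu" (is "_ = ?X")
proof -
  have "m2map (psubst (conjsubst g)) matMu = (m2list ?X ! 0, m2list ?X ! 1, m2list ?X ! 2, m2list ?X ! 3)"
    by (simp add: psubst_eq_eval_pm m2map_eval_pm_matMu comm_ring_hom_pconst conjsubst_eq)
  then show ?thesis
    by (simp only: m2list_nth_eq)
qed

definition mu_trace_gram :: cpoly where
  "mu_trace_gram = m2tr matMu * trace_gram matC matMu"

lemma psubst_conjsubst_mu_trace_gram:
  assumes "m2det g = 1"
  shows "psubst (conjsubst g) mu_trace_gram = mu_trace_gram"
proof -
  interpret \<sigma>: comm_ring_hom "psubst (conjsubst g)"
    unfolding psubst_eq_eval_pm by (rule comm_ring_hom_eval_pm[OF comm_ring_hom_pconst])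
  have "m2det (m2map pconst g) = 1"
    using comm_ring_hom.hom_m2det[OF comm_ring_hom_pconst, of g] assms by (simp add: pconst_def)
  then show ?thesis
    by (simp add: mu_trace_gram_def \<sigma>.hom_mult \<sigma>.hom_m2tr \<sigma>.hom_trace_gram
        m2map_psubst_conjsubst_matC m2map_psubst_conjsubst_matMu trace_gram_m2conj m2tr_m2conj)
qed

lemma inB_of_invariant:
  "(\<And>g. m2det g = 1 \<Longrightarrow> psubst (conjsubst g) f = f) \<Longrightarrow> inB n f"
  by (simp add: inB_def inJ_0)

section \<open>Nilpotency modulo the defining ideal\<close>

lemma m2pow_adj_3:
  "m2pow (m2adj B) 3 = m2add (m2smul (m2tr B ^ 2 - m2det B) (m2adj B)) (m2scalar (- (m2det B * m2tr B)))"
  by (cases B rule: prod_cases4)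
    (simp add: numeral_3_eq_3 m2scalar_def m2id_def algebra_simps power2_eq_square)

lemma relword_mul_right:
  fixes A B :: "'a::comm_ring_1 m2" and n :: nat
  defines "C \<equiv> m2pow A n"
  shows "m2mul (relword n A B) B =
    m2smul (m2det B)
      (m2add (m2smul ((m2tr B ^ 2 - m2det B) * m2tr (m2mul C (m2adj B)) - m2det B * m2tr B * m2tr C) C)
      (m2add (m2smul (- ((m2tr B ^ 2 - m2det B) * m2det C)) B)
             (m2scalar (m2det B * m2tr B * m2det C))))"
  unfolding relword_def C_def[symmetric] m2pow_adj_3
  by (cases C rule: prod_cases4, cases B rule: prod_cases4)
    (simp add: m2scalar_def algebra_simps power2_eq_square)

text \<open>Multiply the relator by \<open>\<mu>\<close>, reduce \<open>\<mu>\<^sup>-\<^sup>3\<close> and \<open>c\<^sup>n \<mu>\<^sup>-\<^sup>1 c\<^sup>n\<close> by Cayley--Hamilton and use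
  \<open>det \<mu> \<equiv> det (c\<^sup>n) \<equiv> 1\<close> to clean up the coefficients.\<close>
lemma relator_times_mu_reduced_in_J:
  fixes n :: nat
  defines "C \<equiv> m2pow matC n" and "y \<equiv> m2tr matMu"
  shows "m2_inJ n (m2add (m2smul ((y^2 - 1) * m2tr (m2mul C (m2adj matMu)) - y * m2tr C) C)
    (m2add (m2scalar y) (m2smul (- (y^2)) matMu)))"
proof -
  define B b dC where "B = (matMu :: cpoly m2)" and "b = m2det B" and "dC = m2det C"
  define \<delta> \<gamma> where "\<delta> = m2tr (m2mul C (m2adj B))" and "\<gamma> = m2tr C"
  define s1 s2 s3 where "s1 = (y^2 - b) * \<delta> - b * y * \<gamma>" and "s2 = - ((y^2 - b) * dC)"
    and "s3 = b * y * dC"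
  define R where "R = m2mul (m2add (relword n matC B) (m2scalar (- 1))) B"
  have b: "inJ n (b - 1)"
    using inJ_defining_relations(2) by (simp add: b_def B_def)
  have dC: "inJ n (dC - 1)"
    using inJ_power_minus_1[OF inJ_defining_relations(1)] by (simp add: dC_def C_def m2det_pow)
  have "R = m2add (m2mul (relword n matC B) B) (m2smul (- 1) B)"
    unfolding R_def by (cases "relword n matC B" rule: prod_cases4, cases B rule: prod_cases4)
      (simp add: m2scalar_def algebra_simps)
  also have "\<dots> = m2add (m2smul b (m2add (m2smul s1 C) (m2add (m2smul s2 B) (m2scalar s3))))
      (m2smul (- 1) B)"
    unfolding relword_mul_right C_def[symmetric]
    by (simp add: s1_def s2_def s3_def y_def b_def dC_def \<delta>_def \<gamma>_def B_def)
  finally have "m2add (m2smul ((y^2 - 1) * \<delta> - y * \<gamma>) C) (m2add (m2scalar y) (m2smul (- (y^2)) B)) =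
      m2add R (m2add (m2smul ((y^2 - 1) * \<delta> - y * \<gamma> - b * s1) C)
        (m2add (m2smul (1 - y^2 - b * s2) B) (m2scalar (y - b * s3))))"
    by (cases C rule: prod_cases4, cases B rule: prod_cases4) (simp add: m2scalar_def algebra_simps)
  moreover have "m2_inJ n R"
    unfolding R_def B_def by (intro m2_inJ_mul_right inJ_defining_relations)
  moreover have "inJ n ((y^2 - 1) * \<delta> - y * \<gamma> - b * s1)"
    using inJ_mult_left[OF b, of "\<delta> + y * \<gamma> - s1"] by (simp add: s1_def algebra_simps)
  moreover have "inJ n (1 - y^2 - b * s2)"
    using inJ_add[OF inJ_mult_left[OF dC, of "b * (y^2 - b)"] inJ_mult_left[OF b, of "y^2 - b - 1"]]
    by (simp add: s2_def algebra_simps)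
  moreover have "inJ n (y - b * s3)"
    using inJ_add[OF inJ_mult_left[OF dC, of "- (y * b^2)"] inJ_mult_left[OF b, of "- (y * (b + 1))"]]
    by (simp add: s3_def algebra_simps power2_eq_square)
  ultimately show ?thesis
    unfolding B_def[symmetric] \<delta>_def[symmetric] \<gamma>_def[symmetric]
    by (simp add: m2_inJ_add m2_inJ_smul m2_inJ_scalar)
qed

lemma mu_trace_square_in_span_mod_J:
  "\<exists>u v. m2_inJ n (m2add (m2smul u matC) (m2add (m2scalar v) (m2smul (- (m2tr matMu ^ 2)) matMu)))"
proof -
  define l where "l = (m2tr matMu ^ 2 - 1) * m2tr (m2mul (m2pow matC n) (m2adj matMu))
    - m2tr matMu * m2tr (m2pow matC n)"
  define \<alpha> \<beta> where "\<alpha> = fst (pow_coeffs n (m2tr matC) (m2det matC))"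
    and "\<beta> = snd (pow_coeffs n (m2tr matC) (m2det matC))"
  have "m2_inJ n (m2add (m2smul l (m2pow matC n))
      (m2add (m2scalar (m2tr matMu)) (m2smul (- (m2tr matMu ^ 2)) matMu)))"
    using relator_times_mu_reduced_in_J[of n, folded l_def] .
  moreover have "m2pow matC n = m2add (m2smul \<alpha> matC) (m2scalar \<beta>)"
    unfolding \<alpha>_def \<beta>_def by (rule m2pow_eq_pow_coeffs)
  moreover have "m2add (m2smul l (m2add (m2smul \<alpha> P) (m2scalar \<beta>))) (m2add (m2scalar y) Q) =
      m2add (m2smul (l * \<alpha>) P) (m2add (m2scalar (l * \<beta> + y)) Q)" for P Q :: "cpoly m2" and y
    by (cases P rule: prod_cases4, cases Q rule: prod_cases4) (simp add: m2scalar_def algebra_simps)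
  ultimately show ?thesis
    by metis
qed

lemma mu_trace_gram_square_inJ: "inJ n (mu_trace_gram ^ 2)"
proof -
  define A B y where "A = (matC :: cpoly m2)" and "B = (matMu :: cpoly m2)" and "y = m2tr matMu"
  obtain u v where "m2_inJ n (m2add (m2smul u A) (m2add (m2scalar v) (m2smul (- (y^2)) B)))"
    (is "m2_inJ n ?M")
    using mu_trace_square_in_span_mod_J unfolding A_def B_def y_def by blast
  then have "inJ n (m2tr ?M)" "inJ n (m2tr (m2mul A ?M))" "inJ n (m2tr (m2mul B ?M))"
    by (simp_all add: inJ_m2tr m2_inJ_mul_left)
  then have "inJ n (- (y^2) * trace_gram A B)"
    by (subst trace_gram_cramer[of ?M u A v "- (y^2)" B, OF refl])
      (intro inJ_add inJ_diff inJ_mult_left)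
  then have "inJ n (- trace_gram A B * (- (y^2) * trace_gram A B))"
    by (rule inJ_mult_left)
  then show ?thesis
    by (simp add: mu_trace_gram_def A_def B_def y_def power2_eq_square mult_ac)
qed

section \<open>Dual numbers\<close>

datatype dual = Dual (primal: complex) (tangent: complex)

lemma dual_eq_iff: "x = y \<longleftrightarrow> primal x = primal y \<and> tangent x = tangent y"
  by (cases x, cases y) simp

instantiation dual :: comm_ring_1
begin

definition "0 = Dual 0 0"
definition "1 = Dual 1 0"
definition "x + y = Dual (primal x + primal y) (tangent x + tangent y)"
definition "x - y = Dual (primal x - primal y) (tangent x - tangent y)"
definition "- x = Dual (- primal x) (- tangent x)"
definition "x * y = Dual (primal x * primal y) (primal x * tangent y + tangent x * primal y)"

instance
  by standard (simp_all add: dual_eq_iff zero_dual_def one_dual_def plus_dual_def minus_dual_def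
      uminus_dual_def times_dual_def algebra_simps)

end

lemma primal_simps [simp]:
  "primal 0 = 0" "primal 1 = 1" "primal (x + y) = primal x + primal y"
  "primal (x - y) = primal x - primal y" "primal (- x) = - primal x"
  "primal (x * y) = primal x * primal y"
  by (simp_all add: zero_dual_def one_dual_def plus_dual_def minus_dual_def uminus_dual_def
      times_dual_def)

lemma tangent_simps [simp]:
  "tangent 0 = 0" "tangent 1 = 0" "tangent (x + y) = tangent x + tangent y"
  "tangent (x - y) = tangent x - tangent y" "tangent (- x) = - tangent x"
  "tangent (x * y) = primal x * tangent y + tangent x * primal y"
  by (simp_all add: zero_dual_def one_dual_def plus_dual_def minus_dual_def uminus_dual_def
      times_dual_def)

lemma primal_numeral [simp]: "primal (numeral k) = numeral k"
  and tangent_numeral [simp]: "tangent (numeral k) = 0"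
  by (induct k) (simp_all only: numeral.simps primal_simps tangent_simps add_0)

lemma primal_of_nat [simp]: "primal (of_nat k) = of_nat k"
  and tangent_of_nat [simp]: "tangent (of_nat k) = 0"
  by (induct k) simp_all

definition dual_const :: "complex \<Rightarrow> dual" where
  "dual_const c = Dual c 0"

lemma primal_dual_const [simp]: "primal (dual_const c) = c"
  and tangent_dual_const [simp]: "tangent (dual_const c) = 0"
  by (simp_all add: dual_const_def)

lemma comm_ring_hom_dual_const: "comm_ring_hom dual_const"
  by unfold_locales (simp_all add: dual_eq_iff)

lemma comm_ring_hom_primal: "comm_ring_hom primal"
  by unfold_locales simp_all

section \<open>First-order deformations\<close>

text \<open>Since \<open>X\<^sup>2 = -I\<close> and \<open>\<epsilon>\<^sup>2 = 0\<close>, \<open>adj X' = t\<epsilon> - X\<close> and \<open>(adj X')\<^sup>3 = X - 3t\<epsilon>\<close>; using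
  \<open>X S X = S + tr (X S) X\<close> for traceless \<open>S\<close>, the word collapses to \<open>I + \<epsilon> (4t - tr (X S)) X\<close>.\<close>
lemma tangent_relator:
  fixes c t :: complex and S X :: "complex m2"
  assumes c: "c * c = 1" and S: "m2tr S = 0" and X: "m2tr X = 0" "m2det X = 1"
    and t: "4 * t = m2tr (m2mul X S)"
  defines "P \<equiv> m2add (m2scalar (Dual c 0)) (m2smul (Dual 0 c) (m2map dual_const S))"
    and "X' \<equiv> m2add (m2map dual_const X) (m2scalar (Dual 0 t))"
  shows "m2mul P (m2mul (m2pow (m2adj X') 3) (m2mul P (m2adj X'))) = m2id"
proof -
  obtain s1 s2 s3 where S': "S = (s1, s2, s3, - s1)" using S by (rule traceless_m2_cases)
  obtain x1 x2 x3 where X': "X = (x1, x2, x3, - x1)" using X(1) by (rule traceless_m2_cases)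
  have x: "x1 * x1 + x2 * x3 = - 1"
    using X(2) by (simp add: X') algebra
  have t': "4 * t = 2 * x1 * s1 + x2 * s3 + x3 * s2"
    using t by (simp add: S' X' algebra_simps)
  show ?thesis
    unfolding P_def X'_def S' X'
    apply (simp add: m2id_def m2scalar_def numeral_3_eq_3 dual_eq_iff one_dual_def zero_dual_def)
    using c x t' by (intro conjI; algebra)
qed

definition tangent_c :: "complex m2 \<Rightarrow> dual m2" where
  "tangent_c A = m2add (m2smul (Dual 1 (2 * m2tr A)) (m2map dual_const A)) (m2scalar (Dual 0 (- 4)))"

definition tangent_mu :: "nat \<Rightarrow> complex m2 \<Rightarrow> complex m2 \<Rightarrow> dual m2" where
  "tangent_mu n A X = m2add (m2map dual_const X) (m2scalar (Dual 0 (of_nat n * m2tr (m2mul A X))))"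

lemma m2det_tangent_c:
  assumes "m2det A = 1"
  shows "m2det (tangent_c A) = 1"
proof -
  obtain a b c d where A: "A = (a, b, c, d)" by (cases A rule: prod_cases4)
  have "a * d - b * c = 1" using assms by (simp add: A)
  then show ?thesis
    unfolding tangent_c_def A
    by (simp add: m2scalar_def dual_eq_iff one_dual_def algebra_simps) algebra
qed

lemma m2det_tangent_mu:
  assumes "m2tr X = 0" "m2det X = 1"
  shows "m2det (tangent_mu n A X) = 1"
proof -
  obtain a b c where X: "X = (a, b, c, - a)" using assms(1) by (rule traceless_m2_cases)
  show ?thesis
    using assms(2) unfolding tangent_mu_def X
    by (simp add: m2scalar_def dual_eq_iff one_dual_def algebra_simps)
qed

lemma m2map_primal_tangent_c: "m2map primal (tangent_c A) = A"
  unfolding tangent_c_def by (cases A rule: prod_cases4) (simp add: m2scalar_def)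

lemma m2map_primal_tangent_mu: "m2map primal (tangent_mu n A X) = X"
  unfolding tangent_mu_def by (cases X rule: prod_cases4) (simp add: m2scalar_def)

lemma primal_m2tr_tangent_mu: "primal (m2tr (tangent_mu n A X)) = m2tr X"
  unfolding tangent_mu_def by (cases X rule: prod_cases4) (simp add: m2scalar_def)

lemma tangent_m2tr_tangent_mu: "tangent (m2tr (tangent_mu n A X)) = 2 * of_nat n * m2tr (m2mul A X)"
  unfolding tangent_mu_def by (cases X rule: prod_cases4) (simp add: m2scalar_def)

lemma m2pow_tangent_c:
  assumes "m2det A = 1" "m2pow A n = m2scalar c" "n \<ge> 1"
  shows "m2pow (tangent_c A) n =
    m2add (m2scalar (Dual c 0))
      (m2smul (Dual 0 c) (m2map dual_const
        (m2smul (2 * of_nat n) (m2add (m2smul 2 A) (m2scalar (- m2tr A))))))"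
proof -
  obtain k where n: "n = Suc k" using assms(3) by (cases n) auto
  have unit_power: "Dual 1 a ^ j = Dual 1 (of_nat j * a)" for a j
    by (induct j) (simp_all add: dual_eq_iff one_dual_def algebra_simps)
  have "Dual 0 (- 4) * Dual 0 (- 4) = 0"
    by (simp add: dual_eq_iff zero_dual_def)
  moreover have "m2pow A k = m2smul c (m2adj A)"
    by (rule m2pow_eq_scalar_pred[OF assms(1)]) (use assms(2) n in simp)
  ultimately show ?thesis
    using assms(2) unfolding tangent_c_def n
    by (simp only: m2pow_perturb comm_ring_hom.m2map_pow[OF comm_ring_hom_dual_const, symmetric])
      (cases A rule: prod_cases4, simp add: m2scalar_def unit_power dual_eq_iff algebra_simps)
qed

lemma relword_tangent:
  assumes "m2det A = 1" "m2pow A n = m2scalar c" "c * c = 1" "n \<ge> 1"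
    and "m2tr X = 0" "m2det X = 1"
  shows "relword n (tangent_c A) (tangent_mu n A X) = m2id"
proof -
  obtain a b c where X: "X = (a, b, c, - a)" using assms(5) by (rule traceless_m2_cases)
  have "4 * (of_nat n * m2tr (m2mul A X)) =
      m2tr (m2mul X (m2smul (2 * of_nat n) (m2add (m2smul 2 A) (m2scalar (- m2tr A)))))"
    unfolding X by (cases A rule: prod_cases4) (simp add: m2scalar_def algebra_simps)
  then show ?thesis
    unfolding relword_def m2pow_tangent_c[OF assms(1-2,4)] tangent_mu_def
    by (intro tangent_relator assms) (cases A rule: prod_cases4, simp add: m2scalar_def algebra_simps)
qed

definition m2coords :: "'a::zero m2 \<Rightarrow> 'a m2 \<Rightarrow> nat \<Rightarrow> 'a" where
  "m2coords P Q i = (if i < 4 then m2list P ! i else if i < 8 then m2list Q ! (i - 4) else 0)"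

lemma coords_eq_m2coords: "coords = m2coords"
  by (simp add: fun_eq_iff coords_def m2coords_def)

lemma m2map_eval_pm_m2coords:
  assumes "comm_ring_hom emb"
  shows "m2map (eval_pm emb (m2coords P Q)) matC = P" "m2map (eval_pm emb (m2coords P Q)) matMu = Q"
  by (cases P rule: prod_cases4, cases Q rule: prod_cases4,
      simp add: m2map_eval_pm_matC m2map_eval_pm_matMu assms m2coords_def)+

lemma comp_m2coords: "h 0 = 0 \<Longrightarrow> h \<circ> m2coords P Q = m2coords (m2map h P) (m2map h Q)"
  by (cases P rule: prod_cases4, cases Q rule: prod_cases4)
    (auto simp: fun_eq_iff m2coords_def less_Suc_eq numeral_eq_Suc)

lemma comm_ring_hom_vanishes_on_J:
  assumes h: "comm_ring_hom h"
    and rep: "m2det (m2map h matC) = 1" "m2det (m2map h matMu) = 1"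
      "relword n (m2map h matC) (m2map h matMu) = m2id"
    and "inJ n p"
  shows "h p = 0"
proof -
  interpret h: comm_ring_hom h by (fact h)
  obtain w1 w2 w3 w4 where W: "relword n matC matMu = (w1, w2, w3, w4)"
    by (cases "relword n matC matMu" rule: prod_cases4)
  have R: "relgens n = [m2det matC - 1, m2det matMu - 1, w1 - 1, w2 - 0, w3 - 0, w4 - 1]"
    by (simp add: relgens_def W m2id_def)
  have "h w1 = 1" "h w2 = 0" "h w3 = 0" "h w4 = 1"
    using rep(3) h.m2map_relword[of n matC matMu] by (simp_all add: W m2id_def)
  then have "h (relgens n ! i) = 0" if "i < length (relgens n)" for i
    using that rep(1,2) less_Suc_eq
    by (auto simp: R h.hom_simps h.hom_m2det numeral_eq_Suc)
  moreover obtain q where "p = (\<Sum>i<length (relgens n). q i * relgens n ! i)"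
    using \<open>inJ n p\<close> by (auto simp: inJ_def)
  ultimately show ?thesis
    by (simp add: h.hom_sum h.hom_mult)
qed

lemma primal_eval_pm_dual_const:
  "primal (eval_pm dual_const (m2coords P Q) p) = peval (coords (m2map primal P) (m2map primal Q)) p"
proof -
  have "primal \<circ> dual_const = id"
    by (simp add: fun_eq_iff)
  then show ?thesis
    by (simp add: comm_ring_hom.hom_eval_pm[OF comm_ring_hom_primal] comp_m2coords
        coords_eq_m2coords peval_eq_eval_pm)
qed

lemma peval_coords_trace_gram: "peval (coords A X) (trace_gram matC matMu) = trace_gram A X"
proof -
  interpret ev: comm_ring_hom "peval (coords A X)"
    unfolding peval_eq_eval_pm by (rule comm_ring_hom_eval_pm[OF comm_ring_hom_id])
  have "m2map (peval (coords A X)) matC = A" "m2map (peval (coords A X)) matMu = X"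
    by (simp_all add: coords_eq_m2coords peval_eq_eval_pm m2map_eval_pm_m2coords comm_ring_hom_id)
  then show ?thesis
    by (simp add: ev.hom_trace_gram)
qed

text \<open>Evaluate at the first-order deformation of \<open>(A, X)\<close>: there \<open>t\<^sub>\<mu>\<close> has derivative \<open>2 n tr (A X)\<close>
  and vanishes, so the derivative of \<open>s t\<^sub>\<mu> G\<close> is \<open>s(A, X) \<cdot> 2 n tr (A X) \<cdot> G(A, X)\<close>.\<close>
lemma not_inJ_mult_mu_trace_gram_nondegenerate:
  assumes A: "m2det A = 1" "m2pow A n = m2scalar c" "c * c = 1" "n \<ge> 1"
    and X: "m2tr X = 0" "m2det X = 1"
    and s: "peval (coords A X) s \<noteq> 0"
    and nondeg: "m2tr (m2mul A X) \<noteq> 0" "4 - m2tr A ^ 2 - m2tr (m2mul A X) ^ 2 \<noteq> 0"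
  shows "\<not> inJ n (s * mu_trace_gram)"
proof
  assume J: "inJ n (s * mu_trace_gram)"
  define h where "h = eval_pm dual_const (m2coords (tangent_c A) (tangent_mu n A X))"
  interpret h: comm_ring_hom h
    unfolding h_def by (rule comm_ring_hom_eval_pm[OF comm_ring_hom_dual_const])
  have C: "m2map h matC = tangent_c A" and Mu: "m2map h matMu = tangent_mu n A X"
    unfolding h_def by (simp_all add: m2map_eval_pm_m2coords comm_ring_hom_dual_const)
  have primal_h: "primal (h p) = peval (coords A X) p" for p
    unfolding h_def primal_eval_pm_dual_const m2map_primal_tangent_c m2map_primal_tangent_mu ..
  have "h (s * mu_trace_gram) = 0"
    using J by (intro comm_ring_hom_vanishes_on_J[OF h.comm_ring_hom_axioms])
      (simp_all add: C Mu m2det_tangent_c m2det_tangent_mu relword_tangent[OF A X] A X)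
  moreover have "tangent (h (s * mu_trace_gram)) = peval (coords A X) s *
      (2 * of_nat n * m2tr (m2mul A X) * (2 * (4 - m2tr A ^ 2 - m2tr (m2mul A X) ^ 2)))"
    using A X
    by (simp add: mu_trace_gram_def h.hom_mult h.hom_m2tr Mu primal_m2tr_tangent_mu
        tangent_m2tr_tangent_mu primal_h peval_coords_trace_gram trace_gram_traceless)
  moreover have "peval (coords A X) s *
      (2 * of_nat n * m2tr (m2mul A X) * (2 * (4 - m2tr A ^ 2 - m2tr (m2mul A X) ^ 2))) \<noteq> 0"
    using A(4) s nondeg by (intro no_zero_divisors) auto
  ultimately show False
    by (metis tangent_simps(1))
qed

section \<open>Moving the point along a conic\<close>

lemma eventually_poly_nonzero_at:
  fixes p :: "'a::{idom, t1_space} poly"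
  assumes "p \<noteq> 0"
  shows "eventually (\<lambda>x. poly p x \<noteq> 0) (at a)"
proof -
  have "eventually (\<lambda>x. \<forall>r\<in>{r. poly p r = 0}. x \<noteq> r) (at a)"
    using poly_roots_finite[OF assms] by (intro eventually_ball_finite) (auto intro: eventually_neq_at_within)
  then show ?thesis
    by eventually_elim auto
qed

lemma tendsto_peval:
  assumes "\<And>i. ((\<lambda>m. x m i) \<longlongrightarrow> x0 i) F"
  shows "((\<lambda>m. peval (x m) p) \<longlongrightarrow> peval x0 p) F"
  unfolding peval_def by (intro tendsto_intros assms)

lemma tendsto_coords:
  assumes "\<And>j. j < 4 \<Longrightarrow> ((\<lambda>m. m2list (X m) ! j) \<longlongrightarrow> m2list X0 ! j) F"
  shows "((\<lambda>m. coords A (X m) i) \<longlongrightarrow> coords A X0 i) F"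
  using assms[of "i - 4"] by (cases "i < 4"; cases "i < 8") (simp_all add: coords_def)

text \<open>A direction \<open>Y\<close> tangent at \<open>B\<close> to the quadric \<open>{X. tr X = 0, det X = 1}\<close> along which
  \<open>tr (A X)\<close> is not constant to second order.\<close>
lemma exists_moving_direction:
  fixes A B :: "complex m2"
  assumes B: "m2tr B = 0" "m2det B = 1" and A: "m2det A = 1" "4 - m2tr A ^ 2 \<noteq> 0"
  shows "\<exists>Y. m2tr Y = 0 \<and> m2tr (m2mul B Y) = 0 \<and>
    (m2tr (m2mul A Y) \<noteq> 0 \<or> m2det Y \<noteq> 0 \<and> m2tr (m2mul A B) \<noteq> 0)"
proof (cases "4 - m2tr A ^ 2 - m2tr (m2mul A B) ^ 2 = 0")
  case True
  then have "m2tr (m2mul A B) \<noteq> 0"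
    using A(2) by auto
  then show ?thesis
    using exists_traceless_orthogonal_invertible[OF B(1)] by blast
next
  case False
  define Y where "Y = m2add (m2add A (m2scalar (- m2tr A / 2))) (m2smul (m2tr (m2mul A B) / 2) B)"
  obtain b1 b2 b3 where B': "B = (b1, b2, b3, - b1)" using B(1) by (rule traceless_m2_cases)
  obtain a1 a2 a3 a4 where A': "A = (a1, a2, a3, a4)" by (cases A rule: prod_cases4)
  have "- (b1 * b1) - b2 * b3 = 1" "a1 * a4 - a2 * a3 = 1"
    using A(1) B(2) by (simp_all add: A' B')
  then have "m2tr Y = 0" "m2tr (m2mul B Y) = 0"
    "m2tr (m2mul A Y) = - (4 - m2tr A ^ 2 - m2tr (m2mul A B) ^ 2) / 2"
    unfolding Y_def A' B' m2scalar_def by (simp_all add: field_simps power2_eq_square, algebra+)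
  moreover from this(3) False have "m2tr (m2mul A Y) \<noteq> 0"
    by auto
  ultimately show ?thesis
    by blast
qed

text \<open>For traceless \<open>B, Y\<close> with \<open>det B = 1\<close> and \<open>tr (B Y) = 0\<close> one has \<open>det (a B + b Y) = a\<^sup>2 + b\<^sup>2 det Y\<close>;
  this is the rational parametrisation of the conic \<open>a\<^sup>2 + b\<^sup>2 det Y = 1\<close> through \<open>(1, 0)\<close>.\<close>
definition conic_point :: "'a::field m2 \<Rightarrow> 'a m2 \<Rightarrow> 'a \<Rightarrow> 'a m2" where
  "conic_point B Y m = m2add (m2smul ((1 - m2det Y * m^2) / (1 + m2det Y * m^2)) B)
                             (m2smul (2 * m / (1 + m2det Y * m^2)) Y)"

lemma m2tr_conic_point: "m2tr B = 0 \<Longrightarrow> m2tr Y = 0 \<Longrightarrow> m2tr (conic_point B Y m) = 0"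
  by (simp add: conic_point_def m2tr_lincomb)

lemma m2det_conic_point:
  assumes "m2tr B = 0" "m2det B = 1" "m2tr Y = 0" "m2tr (m2mul B Y) = 0" "1 + m2det Y * m^2 \<noteq> 0"
  shows "m2det (conic_point B Y m) = 1"
proof -
  have "m2det (conic_point B Y m) =
      ((1 - m2det Y * m^2)^2 + m2det Y * (2 * m)^2) / (1 + m2det Y * m^2)^2"
    using assms(1-4)
    by (simp add: conic_point_def m2det_traceless_lincomb power_divide add_divide_distrib)
  also have "(1 - m2det Y * m^2)^2 + m2det Y * (2 * m)^2 = (1 + m2det Y * m^2)^2"
    by (simp add: power2_eq_square algebra_simps)
  finally show ?thesis
    using assms(5) by simp
qed

lemma m2tr_mul_conic_point:
  assumes "1 + m2det Y * m^2 \<noteq> 0"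
  shows "(1 + m2det Y * m^2) * m2tr (m2mul A (conic_point B Y m)) =
    (1 - m2det Y * m^2) * m2tr (m2mul A B) + 2 * m * m2tr (m2mul A Y)"
proof -
  define e where "e = 1 + m2det Y * m^2"
  have "e * ((1 - m2det Y * m^2) / e * m2tr (m2mul A B) + 2 * m / e * m2tr (m2mul A Y)) =
      (1 - m2det Y * m^2) * m2tr (m2mul A B) + 2 * m * m2tr (m2mul A Y)"
    using assms unfolding e_def[symmetric] by (simp add: field_simps)
  then show ?thesis
    by (simp add: conic_point_def m2tr_mul_lincomb e_def)
qed

lemma tendsto_conic_point:
  fixes B Y :: "'a::real_normed_field m2"
  assumes "j < 4"
  shows "((\<lambda>m. m2list (conic_point B Y m) ! j) \<longlongrightarrow> m2list B ! j) (at 0)"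
proof -
  have "((\<lambda>m. (1 - m2det Y * m^2) / (1 + m2det Y * m^2) * (m2list B ! j)
      + 2 * m / (1 + m2det Y * m^2) * (m2list Y ! j)) \<longlongrightarrow>
      (1 - m2det Y * 0^2) / (1 + m2det Y * 0^2) * (m2list B ! j)
      + 2 * 0 / (1 + m2det Y * 0^2) * (m2list Y ! j)) (at 0)"
    by (intro tendsto_intros) auto
  then show ?thesis
    by (simp add: conic_point_def m2list_nth_lincomb assms)
qed

text \<open>Along the conic \<open>tr (A X)\<close> is a non-constant rational function of \<open>m\<close>, so it avoids the three
  values \<open>0, \<plusminus>\<surd>(4 - tr A\<^sup>2)\<close> for small \<open>m \<noteq> 0\<close>.\<close>
lemma exists_nondegenerate_traceless_near:
  fixes A B :: "complex m2"
  assumes B: "m2tr B = 0" "m2det B = 1" and A: "m2det A = 1" "4 - m2tr A ^ 2 \<noteq> 0"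
    and s: "peval (coords A B) s \<noteq> 0"
  shows "\<exists>X. m2tr X = 0 \<and> m2det X = 1 \<and> peval (coords A X) s \<noteq> 0 \<and>
    m2tr (m2mul A X) \<noteq> 0 \<and> 4 - m2tr A ^ 2 - m2tr (m2mul A X) ^ 2 \<noteq> 0"
proof -
  obtain Y where Y: "m2tr Y = 0" "m2tr (m2mul B Y) = 0"
    and moving: "m2tr (m2mul A Y) \<noteq> 0 \<or> m2det Y \<noteq> 0 \<and> m2tr (m2mul A B) \<noteq> 0"
    using exists_moving_direction[OF B A] by blast
  define d z w where "d = m2det Y" and "z = m2tr (m2mul A B)" and "w = m2tr (m2mul A Y)"
  have avoid: "eventually (\<lambda>m. (1 - d * m^2) * z + 2 * m * w \<noteq> (1 + d * m^2) * v) (at 0)" for v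
  proof -
    have "[:z - v, 2 * w, - d * (z + v):] \<noteq> 0"
      using moving by (auto simp: d_def z_def w_def)
    from eventually_poly_nonzero_at[OF this] show ?thesis
      by eventually_elim (simp add: algebra_simps power2_eq_square)
  qed
  obtain \<rho> where \<rho>: "\<rho>^2 = 4 - m2tr A ^ 2"
    using power2_csqrt by blast
  have "eventually (\<lambda>m. 1 + d * m^2 \<noteq> 0) (at 0)"
    using eventually_poly_nonzero_at[of "[:1, 0, d:]" 0] by (simp add: power2_eq_square ac_simps)
  moreover have "eventually (\<lambda>m. peval (coords A (conic_point B Y m)) s \<noteq> 0) (at 0)"
    by (rule tendsto_imp_eventually_ne[OF tendsto_peval[OF tendsto_coords[OF tendsto_conic_point]] s])
  ultimately have "eventually (\<lambda>m. 1 + d * m^2 \<noteq> 0 \<and> peval (coords A (conic_point B Y m)) s \<noteq> 0 \<and>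
      (\<forall>v\<in>{0, \<rho>, - \<rho>}. (1 - d * m^2) * z + 2 * m * w \<noteq> (1 + d * m^2) * v)) (at 0)"
    using avoid[of 0] avoid[of \<rho>] avoid[of "- \<rho>"] by eventually_elim blast
  then obtain m where m: "1 + d * m^2 \<noteq> 0" "peval (coords A (conic_point B Y m)) s \<noteq> 0"
    "\<forall>v\<in>{0, \<rho>, - \<rho>}. (1 - d * m^2) * z + 2 * m * w \<noteq> (1 + d * m^2) * v"
    using eventually_happens'[OF at_neq_bot] by blast
  have "\<forall>v\<in>{0, \<rho>, - \<rho>}. m2tr (m2mul A (conic_point B Y m)) \<noteq> v"
    using m(3) m2tr_mul_conic_point[of Y m A B, folded d_def z_def w_def, OF m(1)] by metis
  then have "m2tr (m2mul A (conic_point B Y m)) \<noteq> 0" "m2tr (m2mul A (conic_point B Y m)) ^ 2 \<noteq> \<rho>^2"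
    by (auto simp: power2_eq_iff)
  then show ?thesis
    using m(1,2) \<rho> m2tr_conic_point[OF B(1) Y(1)] m2det_conic_point[OF B Y] unfolding d_def
    by (intro exI[of _ "conic_point B Y m"]) simp
qed

lemma not_inJ_mult_mu_trace_gram:
  assumes A: "m2det A = 1" "m2pow A n = m2scalar c" "c * c = 1" "n \<ge> 1" "4 - m2tr A ^ 2 \<noteq> 0"
    and B: "m2tr B = 0" "m2det B = 1"
    and s: "peval (coords A B) s \<noteq> 0"
  shows "\<not> inJ n (s * mu_trace_gram)"
proof -
  obtain X where "m2tr X = 0" "m2det X = 1" "peval (coords A X) s \<noteq> 0"
    "m2tr (m2mul A X) \<noteq> 0" "4 - m2tr A ^ 2 - m2tr (m2mul A X) ^ 2 \<noteq> 0"
    using exists_nondegenerate_traceless_near[OF B A(1,5) s] by blast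
  then show ?thesis
    by (intro not_inJ_mult_mu_trace_gram_nondegenerate[OF A(1-4)])
qed

lemma m2pow_eq_scalar_root_of_unity:
  fixes A :: "complex m2" and n k :: nat
  assumes "m2det A = 1" "m2tr A = complex_of_real (2 * cos (pi * real k / real n))"
    and "0 < k" "k < n"
  shows "m2pow A n = m2scalar ((- 1) ^ k)" "4 - m2tr A ^ 2 \<noteq> 0"
proof -
  define \<theta> where "\<theta> = pi * real k / real n"
  have "0 < \<theta>" "\<theta> < pi"
    using assms(3,4) by (simp_all add: \<theta>_def field_simps)
  then have sin: "sin \<theta> > 0"
    by (rule sin_gt_zero)
  have n\<theta>: "real n * \<theta> = real k * pi"
    using assms(4) by (simp add: \<theta>_def)
  have "cis \<theta> \<noteq> cis (- \<theta>)"
    using sin by (auto simp: complex_eq_iff)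
  moreover have "cis \<theta> ^ n = (- 1) ^ k" "cis (- \<theta>) ^ n = (- 1) ^ k"
    by (simp_all add: DeMoivre n\<theta> complex_eq_iff cos_npi sin_npi)
  moreover have "m2tr A = cis \<theta> + cis (- \<theta>)" "m2det A = cis \<theta> * cis (- \<theta>)"
    using assms(1,2) by (simp_all add: \<theta>_def complex_eq_iff cis_mult)
  ultimately show "m2pow A n = m2scalar ((- 1) ^ k)"
    by (intro m2pow_eq_scalar)
  have "4 - m2tr A ^ 2 = complex_of_real (4 - (2 * cos \<theta>)^2)"
    using assms(2) by (simp add: \<theta>_def)
  also have "\<dots> = complex_of_real (4 * sin \<theta> ^ 2)"
    by (simp add: sin_squared_eq power_mult_distrib algebra_simps)
  finally show "4 - m2tr A ^ 2 \<noteq> 0"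
    using sin by simp
qed

theorem mainTheorem16:
  fixes n k :: nat
  assumes "n \<ge> 2" and "1 \<le> k" and "k \<le> n - 1"
  shows "\<forall>A B. is_rep n A B \<and> m2tr B = 0
           \<and> m2tr A = complex_of_real (2 * cos (pi * real k / real n))
           \<longrightarrow> nonreduced_at n A B"
proof (intro allI impI)
  fix A B :: "complex m2"
  assume "is_rep n A B \<and> m2tr B = 0 \<and> m2tr A = complex_of_real (2 * cos (pi * real k / real n))"
  then have A: "m2det A = 1" "m2tr A = complex_of_real (2 * cos (pi * real k / real n))"
    and B: "m2tr B = 0" "m2det B = 1"
    by (auto simp: is_rep_def)
  have "0 < k" "k < n"
    using assms by auto
  from m2pow_eq_scalar_root_of_unity[OF A this]
  have pow: "m2pow A n = m2scalar ((- 1) ^ k)" and disc: "4 - m2tr A ^ 2 \<noteq> 0" .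
  have "\<not> inJ n (s * mu_trace_gram)" if "peval (coords A B) s \<noteq> 0" for s
    using assms(1) that
    by (intro not_inJ_mult_mu_trace_gram[OF A(1) pow _ _ disc B]) (simp_all flip: power_add)
  moreover have "inB n mu_trace_gram"
    by (rule inB_of_invariant) (rule psubst_conjsubst_mu_trace_gram)
  moreover have "inB n 1"
    by (rule inB_of_invariant) (simp add: psubst_eq_eval_pm eval_pm_1 comm_ring_hom_pconst)
  moreover have "\<not> in_maxideal n A B 1" "inJ n (1 * mu_trace_gram ^ 2)"
    by (simp_all add: in_maxideal_def peval_eq_eval_pm eval_pm_1 comm_ring_hom_id
        mu_trace_gram_square_inJ)
  ultimately show "nonreduced_at n A B"
    unfolding nonreduced_at_def in_maxideal_def by blast
qed

end
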